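(* Let $m\ge1$ and let $\mathcal{G}=\mathbb{Z}/2^m\mathbb{Z}$ (additive group). Let $e_1,\dots,e_t$ be a sequence of $t$ nonzero elements of $\mathcal{G}$ (repetitions allowed), and let \[ \mathcal{S}=\Big\{\sum_{j=1}^t\delta_je_j:\ \delta_j\in\{-1,0,1\}\Big\}\subseteq\mathcal{G}. \] (i) If $t\ge 2^{m-1}$, then $\overline{2^{m-1}}\in\mathcal{S}$. (ii) If $t=2^{m-1}-1$, then $\overline{2^{m-1}}\notin\mathcal{S}$ if and only if there exists $e\in(\mathbb{Z}/2^m\mathbb{Z})^*$ such that for each $j$, $e_j\equiv e$ or $e_j\equiv -e\pmod{2^m}$.
   Context: $\overline{i}$ denotes the residue class of $i$ modulo $2^m$. *)

theory Defs
  imports "HOL-Number_Theory.Cong"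
begin

definition signed_sums :: "nat \<Rightarrow> nat \<Rightarrow> (nat \<Rightarrow> int) \<Rightarrow> int set" where
  "signed_sums m t e =
     {(\<Sum>j\<in>{1..t}. \<delta> j * e j) mod 2^m | \<delta>. \<forall>j\<in>{1..t}. \<delta> j \<in> {-1, 0, 1}}"

end

theory Submission
  imports Defs
begin

(*
  Write S_J for the set of signed sums of the e_j with j in J, and h for the residue 2^(m-1).
  As long as h is not in S_J, adjoining a further index j enlarges S_J by at least two residues:
  S_J contains 0 and cannot be closed under x \<mapsto> x + e_j, since some multiple of e_j is h;
  a new residue p = x + e_j arrives together with -p, and p = -p would force p \<in> {0, h}.
  Hence |S_J| \<ge> 2|J| + 1, which gives (i).

  If |J| = 2^(m-1) - 1 and h is not in S_J, all these bounds are tight, so S_J consists of all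
  residues except h. For i \<noteq> j, the set S_{J - {i,j}} then has at least 2^m - 5 elements and is
  disjoint from h - S_{i,j}, so the nine combinations \<plusminus>e_i \<plusminus> e_j give at most five residues,
  which forces e_i \<equiv> \<plusminus>e_j. As 1 \<in> S_J is then a multiple of one e_i, that e_i is a unit.
  Conversely, if every e_j \<equiv> \<plusminus>u with u odd, each signed sum is X u with |X| < 2^(m-1),
  and X u \<equiv> h would force 2^(m-1) to divide X.
*)

lemma pow2_dvd_doubleD:
  fixes x :: int
  assumes "m \<ge> 1" "2^m dvd 2 * x"
  shows "x mod 2^m = 0 \<or> x mod 2^m = 2^(m-1)"
proof -
  have pow: "(2::int)^m = 2 * 2^(m-1)" using assms(1) by (cases m) auto
  then obtain k where k: "x = 2^(m-1) * k" using assms(2) by auto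
  show ?thesis
  proof (cases "even k")
    case True
    then show ?thesis using k pow by (auto simp: mult.assoc)
  next
    case False
    then obtain l where "k = 2 * l + 1" by (metis oddE)
    then have "x = 2^(m-1) + 2^m * l" using k pow by (simp add: algebra_simps)
    then show ?thesis using pow by simp
  qed
qed

lemma mod_pow2_eq_half_if_dvd_double_pm:
  fixes c d :: int
  assumes m: "m \<ge> 1" and "2^m dvd 2 * c + d" "2^m dvd 2 * c - d" "\<not> 2^m dvd 2 * c"
  shows "d mod 2^m = 2^(m-1)"
proof -
  have "2 * (2 * c) = (2 * c + d) + (2 * c - d)" by simp
  then have "2^m dvd 2 * (2 * c)" using dvd_add[OF assms(2,3)] by metis
  then have "(2 * c) mod 2^m = 0 \<or> (2 * c) mod 2^m = 2^(m-1)" by (rule pow2_dvd_doubleD[OF m])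
  moreover have "(2 * c) mod 2^m \<noteq> 0" using assms(4) dvd_eq_mod_eq_0 by blast
  moreover have "d mod 2^m = (2 * c) mod 2^m" using assms(3) by (simp add: mod_eq_dvd_iff dvd_diff_commute)
  ultimately show ?thesis by simp
qed

lemma multiple_mod_pow2_eq_half:
  fixes c :: int
  assumes "m \<ge> 1" "c mod 2^m \<noteq> 0"
  shows "\<exists>k::nat. (int k * c) mod 2^m = 2^(m-1)"
proof -
  have "\<exists>k. (2::int)^m dvd 2^k * c" by (intro exI[of _ m]) simp
  then obtain k where k: "(2::int)^m dvd 2^k * c" and least: "\<forall>i<k. \<not> (2::int)^m dvd 2^i * c"
    by (auto simp: exists_least_iff[of "\<lambda>k. (2::int)^m dvd 2^k * c"])
  have "k \<noteq> 0"
  proof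
    assume "k = 0"
    with k have "2^m dvd c" by simp
    with assms(2) show False by (simp add: dvd_eq_mod_eq_0)
  qed
  then have "2^m dvd 2 * (2^(k-1) * c)" using k by (cases k) (auto simp: mult.assoc)
  moreover have "(2^(k-1) * c) mod 2^m \<noteq> 0"
    using least \<open>k \<noteq> 0\<close> by (simp add: dvd_eq_mod_eq_0)
  ultimately have "(2^(k-1) * c) mod 2^m = 2^(m-1)" using pow2_dvd_doubleD assms(1) by blast
  then show ?thesis by (intro exI[of _ "2^(k-1)"]) simp
qed

lemma card_add_mod_le_if_avoids:
  fixes n h :: int
  assumes "0 < n" "X \<subseteq> {0..<n}" "A \<subseteq> {0..<n}" "\<forall>x\<in>X. \<forall>a\<in>A. (x + a) mod n \<noteq> h mod n"
  shows "card X + card A \<le> nat n"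
proof -
  define g where "g a = (h - a) mod n" for a
  have "inj_on g A"
  proof
    fix a a' assume "a \<in> A" "a' \<in> A" "g a = g a'"
    then have "(h - g a) mod n = (h - g a') mod n" by simp
    moreover have "a mod n = a" "a' mod n = a'" using \<open>a \<in> A\<close> \<open>a' \<in> A\<close> assms(3) by auto
    ultimately show "a = a'" by (simp add: g_def mod_diff_right_eq)
  qed
  moreover have "g a \<notin> X" if "a \<in> A" for a
  proof
    assume "g a \<in> X"
    moreover have "(g a + a) mod n = h mod n" by (simp add: g_def mod_add_left_eq)
    ultimately show False using assms(4) that by blast
  qed
  then have "X \<inter> g ` A = {}" by blast
  moreover have "X \<union> g ` A \<subseteq> {0..<n}" using assms(1,2) by (auto simp: g_def)
  then have "card (X \<union> g ` A) \<le> nat n" using card_mono[of "{0..<n}"] by fastforce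
  moreover have "finite X" "finite A" using assms(2,3) finite_subset by auto
  ultimately show ?thesis by (simp add: card_Un_disjoint card_image)
qed

lemma card_pm_combinations_ge_6:
  fixes a b :: int
  assumes m: "m \<ge> 1"
    and "a mod 2^m \<notin> {0, 2^(m-1)}" "b mod 2^m \<notin> {0, 2^(m-1)}"
    and "\<not> [a = b] (mod 2^m)" "\<not> [a = - b] (mod 2^m)"
  shows "6 \<le> card {(x * a + y * b) mod 2^m | x y. x \<in> {-1, 0, 1} \<and> y \<in> {-1, 0, 1}}"
proof -
  let ?n = "(2::int)^m"
  define z where "z x y = (x * a + y * b) mod ?n" for x y :: int
  define A where "A = {z x y | x y. x \<in> {-1, 0, 1} \<and> y \<in> {-1, 0, 1}}"
  define F where "F = {z 0 0, z 1 0, z (-1) 0, z 0 1, z 0 (-1)}"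
  have z_eq: "z x y = z x' y' \<longleftrightarrow> ?n dvd (x - x') * a + (y - y') * b" for x y x' y'
    by (simp add: z_def mod_eq_dvd_iff algebra_simps)
  have not_dvd_double: "\<not> ?n dvd 2 * c" if "c mod ?n \<notin> {0, 2^(m-1)}" for c
    using that pow2_dvd_doubleD[OF m] by blast
  have a: "\<not> ?n dvd a" "\<not> ?n dvd 2 * a" and b: "\<not> ?n dvd b" "\<not> ?n dvd 2 * b"
    using assms(2,3) not_dvd_double by (auto simp: dvd_eq_mod_eq_0)
  have ab: "\<not> ?n dvd a - b" "\<not> ?n dvd a + b"
    using assms(4,5) by (simp_all add: cong_iff_dvd_diff)
  have ab': "\<not> ?n dvd - a - b" "\<not> ?n dvd b - a"
    using ab by (simp_all add: dvd_diff_commute add.commute)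
  have distinct: "z 0 0 \<noteq> z 1 0" "z 0 0 \<noteq> z (-1) 0" "z 0 0 \<noteq> z 0 1" "z 0 0 \<noteq> z 0 (-1)"
    "z 1 0 \<noteq> z (-1) 0" "z 1 0 \<noteq> z 0 1" "z 1 0 \<noteq> z 0 (-1)"
    "z (-1) 0 \<noteq> z 0 1" "z (-1) 0 \<noteq> z 0 (-1)" "z 0 1 \<noteq> z 0 (-1)"
    using a b ab ab' by (simp_all add: z_eq)
  have "card F = 5" unfolding F_def using distinct by simp
  have coprime_5: "?n dvd c" if "?n dvd 5 * c" for c
  proof -
    have "coprime ?n 5" by simp
    then show ?thesis using that by (simp add: coprime_dvd_mult_right_iff)
  qed
  \<comment> \<open>Otherwise \<open>b \<equiv> \<plusminus>2a\<close> or \<open>a \<equiv> \<plusminus>2b\<close> in one of four incompatible combinations.\<close>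
  have "z 1 1 \<notin> F \<or> z 1 (-1) \<notin> F"
  proof (rule ccontr)
    assume "\<not> ?thesis"
    then have "?n dvd 2 * a + b \<or> ?n dvd a + 2 * b" "?n dvd 2 * a - b \<or> ?n dvd a - 2 * b"
      using a b ab by (auto simp: F_def z_eq)
    then show False
    proof (elim disjE)
      assume "?n dvd 2 * a + b" "?n dvd 2 * a - b"
      then show False using mod_pow2_eq_half_if_dvd_double_pm[OF m] a(2) assms(3) by blast
    next
      assume "?n dvd 2 * a + b" "?n dvd a - 2 * b"
      moreover have "5 * a = 2 * (2 * a + b) + (a - 2 * b)" by simp
      ultimately have "?n dvd 5 * a" by (metis dvd_add dvd_mult)
      then show False using coprime_5 a(1) by blast
    next
      assume "?n dvd a + 2 * b" "?n dvd 2 * a - b"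
      moreover have "5 * b = 2 * (a + 2 * b) - (2 * a - b)" by simp
      ultimately have "?n dvd 5 * b" by (metis dvd_diff dvd_mult)
      then show False using coprime_5 b(1) by blast
    next
      assume "?n dvd a + 2 * b" "?n dvd a - 2 * b"
      then show False using mod_pow2_eq_half_if_dvd_double_pm[OF m, of b a] b(2) assms(2)
        by (simp add: add.commute dvd_diff_commute)
    qed
  qed
  moreover have "z 1 1 \<in> A" "z 1 (-1) \<in> A" unfolding A_def by blast+
  ultimately obtain w where "w \<in> A" "w \<notin> F" by blast
  moreover have "F \<subseteq> A" unfolding F_def A_def by blast
  moreover have "finite A" unfolding A_def z_def by (rule finite_subset[of _ "{0..<?n}"]) auto
  ultimately have "card (insert w F) \<le> card A" by (intro card_mono) auto
  then have "6 \<le> card A" using \<open>card F = 5\<close> \<open>w \<notin> F\<close> by (simp add: F_def)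
  then show ?thesis unfolding A_def z_def .
qed

definition signed_sums_on :: "int \<Rightarrow> (nat \<Rightarrow> int) \<Rightarrow> nat set \<Rightarrow> int set" where
  "signed_sums_on n e J = {(\<Sum>j\<in>J. \<delta> j * e j) mod n | \<delta>. \<forall>j\<in>J. \<delta> j \<in> {-1, 0, 1}}"

lemma signed_sums_eq_signed_sums_on: "signed_sums m t e = signed_sums_on (2^m) e {1..t}"
  unfolding signed_sums_def signed_sums_on_def ..

lemma signed_sums_onI:
  "\<forall>j\<in>J. \<delta> j \<in> {-1, 0, 1} \<Longrightarrow> (\<Sum>j\<in>J. \<delta> j * e j) mod n \<in> signed_sums_on n e J"
  unfolding signed_sums_on_def by blast

lemma signed_sums_onE:
  assumes "x \<in> signed_sums_on n e J"
  obtains \<delta> where "x = (\<Sum>j\<in>J. \<delta> j * e j) mod n" "\<forall>j\<in>J. \<delta> j \<in> {-1, 0, 1}"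
  using assms unfolding signed_sums_on_def by blast

lemma signed_sums_on_subset: "0 < n \<Longrightarrow> signed_sums_on n e J \<subseteq> {0..<n}"
  unfolding signed_sums_on_def by auto

lemma finite_signed_sums_on: "0 < n \<Longrightarrow> finite (signed_sums_on n e J)"
  using finite_subset[OF signed_sums_on_subset] by blast

lemma zero_in_signed_sums_on: "0 \<in> signed_sums_on n e J"
  using signed_sums_onI[of J "\<lambda>_. 0"] by simp

lemma signed_sums_on_uminus: "x \<in> signed_sums_on n e J \<Longrightarrow> (- x) mod n \<in> signed_sums_on n e J"
proof -
  assume "x \<in> signed_sums_on n e J"
  then obtain \<delta> where \<delta>: "x = (\<Sum>j\<in>J. \<delta> j * e j) mod n" "\<forall>j\<in>J. \<delta> j \<in> {-1, 0, 1}"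
    by (rule signed_sums_onE)
  then have "(- x) mod n = (\<Sum>j\<in>J. - \<delta> j * e j) mod n"
    by (simp add: mod_minus_eq sum_negf)
  moreover have "\<forall>j\<in>J. - \<delta> j \<in> {-1, 0, 1}" using \<delta>(2) by auto
  ultimately show ?thesis using signed_sums_onI[of J "\<lambda>j. - \<delta> j"] by simp
qed

lemma signed_sums_on_add:
  assumes "finite J" "finite L" "J \<inter> L = {}"
    and "x \<in> signed_sums_on n e J" "y \<in> signed_sums_on n e L"
  shows "(x + y) mod n \<in> signed_sums_on n e (J \<union> L)"
proof -
  obtain \<delta> where \<delta>: "x = (\<Sum>j\<in>J. \<delta> j * e j) mod n" "\<forall>j\<in>J. \<delta> j \<in> {-1, 0, 1}"
    using assms(4) by (rule signed_sums_onE)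
  obtain \<gamma> where \<gamma>: "y = (\<Sum>j\<in>L. \<gamma> j * e j) mod n" "\<forall>j\<in>L. \<gamma> j \<in> {-1, 0, 1}"
    using assms(5) by (rule signed_sums_onE)
  define \<epsilon> where "\<epsilon> j = (if j \<in> J then \<delta> j else \<gamma> j)" for j
  have "\<forall>j\<in>J \<union> L. \<epsilon> j \<in> {-1, 0, 1}" using \<delta>(2) \<gamma>(2) by (auto simp: \<epsilon>_def)
  then have "(\<Sum>j\<in>J \<union> L. \<epsilon> j * e j) mod n \<in> signed_sums_on n e (J \<union> L)"
    by (rule signed_sums_onI)
  moreover have "(\<Sum>j\<in>J \<union> L. \<epsilon> j * e j) = (\<Sum>j\<in>J. \<delta> j * e j) + (\<Sum>j\<in>L. \<gamma> j * e j)"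
    using assms(1-3) by (auto simp: sum.union_disjoint \<epsilon>_def intro!: sum.cong)
  ultimately show ?thesis using \<delta>(1) \<gamma>(1) by (simp add: mod_add_eq)
qed

lemma signed_sums_on_insert:
  assumes "finite J" "j \<notin> J" "x \<in> signed_sums_on n e J" "d \<in> {-1, 0, 1}"
  shows "(x + d * e j) mod n \<in> signed_sums_on n e (insert j J)"
proof -
  have "(d * e j) mod n \<in> signed_sums_on n e {j}"
    using signed_sums_onI[of "{j}" "\<lambda>_. d"] assms(4) by simp
  with assms(1-3) have "(x + (d * e j) mod n) mod n \<in> signed_sums_on n e (J \<union> {j})"
    by (intro signed_sums_on_add) auto
  then show ?thesis by (simp add: mod_add_right_eq)
qed

lemma signed_sums_on_mono:
  assumes "finite K" "J \<subseteq> K"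
  shows "signed_sums_on n e J \<subseteq> signed_sums_on n e K"
proof
  fix x assume "x \<in> signed_sums_on n e J"
  then obtain \<delta> where \<delta>: "x = (\<Sum>j\<in>J. \<delta> j * e j) mod n" "\<forall>j\<in>J. \<delta> j \<in> {-1, 0, 1}"
    by (rule signed_sums_onE)
  define \<delta>' where "\<delta>' j = (if j \<in> J then \<delta> j else 0)" for j
  have "\<forall>j\<in>K. \<delta>' j \<in> {-1, 0, 1}" using \<delta>(2) by (simp add: \<delta>'_def)
  then have "(\<Sum>j\<in>K. \<delta>' j * e j) mod n \<in> signed_sums_on n e K" by (rule signed_sums_onI)
  moreover have "(\<Sum>j\<in>K. \<delta>' j * e j) = (\<Sum>j\<in>J. \<delta> j * e j)"
    using assms by (intro sum.mono_neutral_cong_right) (auto simp: \<delta>'_def)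
  ultimately show "x \<in> signed_sums_on n e K" using \<delta>(1) by simp
qed

lemma summand_in_signed_sums_on:
  assumes "finite K" "k \<in> K"
  shows "e k mod n \<in> signed_sums_on n e K"
proof -
  have "e k mod n \<in> signed_sums_on n e {k}"
    using signed_sums_onI[of "{k}" "\<lambda>_. 1"] by simp
  then show ?thesis using signed_sums_on_mono[OF assms(1), of "{k}"] assms(2) by auto
qed

lemma mod_multiple_mem_if_add_closed:
  fixes c n :: int
  assumes "0 \<in> T" "\<forall>x\<in>T. (x + c) mod n \<in> T"
  shows "(int k * c) mod n \<in> T"
proof (induction k)
  case 0
  then show ?case using assms(1) by simp
next
  case (Suc k)
  then have "((int k * c) mod n + c) mod n \<in> T" using assms(2) by blast
  moreover have "((int k * c) mod n + c) mod n = (int (Suc k) * c) mod n"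
    by (simp add: mod_add_left_eq mod_add_right_eq distrib_right add.commute)
  ultimately show ?case by simp
qed

lemma card_signed_sums_on_insert:
  assumes "m \<ge> 1" "finite J" "j \<notin> J" "e j mod 2^m \<noteq> 0"
    and half: "2^(m-1) \<notin> signed_sums_on (2^m) e (insert j J)"
  shows "card (signed_sums_on (2^m) e J) + 2 \<le> card (signed_sums_on (2^m) e (insert j J))"
proof -
  let ?S = "signed_sums_on (2^m) e J" and ?S' = "signed_sums_on (2^m) e (insert j J)"
  have sub: "?S \<subseteq> ?S'" using assms(2) by (intro signed_sums_on_mono) auto
  have "\<exists>x\<in>?S. (x + e j) mod 2^m \<notin> ?S"
  proof (rule ccontr)
    assume "\<not> ?thesis"
    then have "(int k * e j) mod 2^m \<in> ?S" for k
      by (intro mod_multiple_mem_if_add_closed zero_in_signed_sums_on) blast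
    moreover obtain k where "(int k * e j) mod 2^m = 2^(m-1)"
      using multiple_mod_pow2_eq_half[OF assms(1,4)] by blast
    ultimately show False using sub half by (metis subsetD)
  qed
  then obtain x where x: "x \<in> ?S" and p_notin: "(x + e j) mod 2^m \<notin> ?S" by blast
  define p where "p = (x + e j) mod 2^m"
  have p_in: "p \<in> ?S'"
    unfolding p_def using signed_sums_on_insert[OF assms(2,3) x, of 1] by simp
  have neg_p_in: "(- p) mod 2^m \<in> ?S'" using signed_sums_on_uminus[OF p_in] .
  have neg_p_notin: "(- p) mod 2^m \<notin> ?S"
  proof
    assume "(- p) mod 2^m \<in> ?S"
    then have "(- ((- p) mod 2^m)) mod 2^m \<in> ?S" by (rule signed_sums_on_uminus)
    then show False using p_notin by (simp add: mod_minus_eq p_def add.commute)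
  qed
  have "p \<noteq> (- p) mod 2^m"
  proof
    assume "p = (- p) mod 2^m"
    then have "2^m dvd 2 * p" by (metis mod_eq_dvd_iff mod_mod_trivial diff_minus_eq_add mult_2)
    then have "p mod 2^m = 0 \<or> p mod 2^m = 2^(m-1)" by (rule pow2_dvd_doubleD[OF assms(1)])
    then have "p = 0 \<or> p = 2^(m-1)" by (simp add: p_def)
    then show False using zero_in_signed_sums_on p_notin p_in half by (auto simp: p_def)
  qed
  then have "card (insert p (insert ((- p) mod 2^m) ?S)) = card ?S + 2"
    using neg_p_notin p_notin finite_signed_sums_on[of "2^m"] by (simp add: p_def)
  moreover have "card (insert p (insert ((- p) mod 2^m) ?S)) \<le> card ?S'"
    using p_in neg_p_in sub by (intro card_mono finite_signed_sums_on) auto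
  ultimately show ?thesis by simp
qed

lemma card_signed_sums_on_ge:
  assumes "m \<ge> 1" "finite J" "\<forall>j\<in>J. e j mod 2^m \<noteq> 0"
    and "2^(m-1) \<notin> signed_sums_on (2^m) e J"
  shows "2 * card J + 1 \<le> card (signed_sums_on (2^m) e J)"
  using assms(2-4)
proof (induction J rule: finite_induct)
  case empty
  have "signed_sums_on (2^m) e {} \<noteq> {}" using zero_in_signed_sums_on by blast
  then show ?case using finite_signed_sums_on[of "2^m"] by (simp add: Suc_le_eq card_gt_0_iff)
next
  case (insert j J)
  have "2^(m-1) \<notin> signed_sums_on (2^m) e J"
    using insert.prems(2) signed_sums_on_mono[of "insert j J" J] insert.hyps(1) by auto
  then have "2 * card J + 1 \<le> card (signed_sums_on (2^m) e J)"
    using insert.IH insert.prems(1) by simp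
  moreover have "card (signed_sums_on (2^m) e J) + 2 \<le> card (signed_sums_on (2^m) e (insert j J))"
    using insert assms(1) by (intro card_signed_sums_on_insert) auto
  ultimately show ?case using insert.hyps by simp
qed

lemma half_in_signed_sums_on:
  assumes "m \<ge> 1" "finite J" "\<forall>j\<in>J. e j mod 2^m \<noteq> 0" "2^(m-1) \<le> card J"
  shows "2^(m-1) \<in> signed_sums_on (2^m) e J"
proof (rule ccontr)
  assume "2^(m-1) \<notin> signed_sums_on (2^m) e J"
  then have "2 * card J + 1 \<le> card (signed_sums_on (2^m) e J)"
    using assms(1-3) card_signed_sums_on_ge by blast
  also have "\<dots> \<le> card {0..<(2::int)^m}"
    by (intro card_mono signed_sums_on_subset) auto
  also have "\<dots> = 2^m" by (simp add: nat_power_eq)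
  finally have "2 * card J + 1 \<le> 2^m" .
  moreover have "(2::nat)^m = 2 * 2^(m-1)" using assms(1) by (cases m) auto
  ultimately show False using assms(4) by linarith
qed

lemma cong_pm_if_half_notin_signed_sums_on:
  assumes m: "m \<ge> 1" and K: "finite K" "i \<in> K" "j \<in> K" "i \<noteq> j"
    and nonzero: "\<forall>k\<in>K. e k mod 2^m \<noteq> 0"
    and half: "2^(m-1) \<notin> signed_sums_on (2^m) e K"
    and card_K: "card K = 2^(m-1) - 1"
  shows "[e i = e j] (mod 2^m) \<or> [e i = - e j] (mod 2^m)"
proof (rule ccontr)
  assume not_pm: "\<not> ?thesis"
  let ?S = "signed_sums_on (2^m) e"
  define J where "J = K - {i, j}"
  have "card {i, j} \<le> card K" using K by (intro card_mono) auto
  then have J: "finite J" "J \<inter> {i, j} = {}" "J \<union> {i, j} = K" "card J + 2 = card K"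
    using K by (auto simp: J_def card_Diff_subset)
  have "?S J \<subseteq> ?S K" using K(1) by (intro signed_sums_on_mono) (auto simp: J_def)
  then have "2^(m-1) \<notin> ?S J" using half by blast
  moreover have "\<forall>k\<in>J. e k mod 2^m \<noteq> 0" using nonzero by (auto simp: J_def)
  ultimately have "2 * card J + 1 \<le> card (?S J)"
    using card_signed_sums_on_ge[OF m J(1)] by blast
  moreover have "card (?S J) + card (?S {i, j}) \<le> 2^m"
  proof -
    have half_mod: "(2::int)^(m-1) mod 2^m = 2^(m-1)" using m by (simp add: power_strict_increasing)
    have "(x + y) mod 2^m \<noteq> 2^(m-1) mod 2^m" if "x \<in> ?S J" "y \<in> ?S {i, j}" for x y
    proof -
      have "(x + y) mod 2^m \<in> ?S K" using signed_sums_on_add[OF J(1) _ J(2) that] J(3) by simp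
      then show ?thesis using half half_mod by auto
    qed
    then have "card (?S J) + card (?S {i, j}) \<le> nat (2^m)"
      by (intro card_add_mod_le_if_avoids signed_sums_on_subset) auto
    then show ?thesis by (simp add: nat_power_eq)
  qed
  moreover have "6 \<le> card (?S {i, j})"
  proof -
    have "e k mod 2^m \<notin> {0, 2^(m-1)}" if "k \<in> K" for k
    proof -
      have "e k mod 2^m \<in> ?S K" using K(1) that by (rule summand_in_signed_sums_on)
      then show ?thesis using nonzero that half by auto
    qed
    then have "6 \<le> card {(x * e i + y * e j) mod 2^m | x y. x \<in> {-1, 0, 1} \<and> y \<in> {-1, 0, 1}}"
      using K not_pm by (intro card_pm_combinations_ge_6[OF m]) auto
    also have "\<dots> \<le> card (?S {i, j})"
    proof (intro card_mono finite_signed_sums_on subsetI)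
      fix w assume "w \<in> {(x * e i + y * e j) mod 2^m | x y. x \<in> {-1, 0, 1} \<and> y \<in> {-1, 0, 1}}"
      then obtain x y where "w = (x * e i + y * e j) mod 2^m" "x \<in> {-1, 0, 1}" "y \<in> {-1, 0, 1}"
        by blast
      then show "w \<in> ?S {i, j}"
        using signed_sums_onI[of "{i, j}" "\<lambda>k. if k = i then x else y" e "2^m"] K(4) by simp
    qed simp
    finally show ?thesis .
  qed
  moreover have "(2::nat)^m = 2 * 2^(m-1)" using m by (cases m) auto
  ultimately show False using J(4) card_K by linarith
qed

lemma signed_sums_on_eq_if_card:
  assumes m: "m \<ge> 1" and K: "finite K" and nonzero: "\<forall>k\<in>K. e k mod 2^m \<noteq> 0"
    and half: "2^(m-1) \<notin> signed_sums_on (2^m) e K"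
    and card_K: "card K = 2^(m-1) - 1"
  shows "signed_sums_on (2^m) e K = {0..<2^m} - {2^(m-1)}" (is "?S = _")
proof (rule card_subset_eq)
  show "?S \<subseteq> {0..<2^m} - {2^(m-1)}" using signed_sums_on_subset[of "2^m" e K] half by auto
  have "card ({0..<2^m} - {(2::int)^(m-1)}) = 2^m - 1"
    using m by (simp add: card_Diff_singleton nat_power_eq power_strict_increasing)
  also have "\<dots> = 2 * card K + 1"
  proof -
    have "(2::nat)^m = 2 * 2^(m-1)" "(0::nat) < 2^(m-1)" using m by (cases m) auto
    then show ?thesis using card_K by arith
  qed
  finally have "card ({0..<2^m} - {(2::int)^(m-1)}) = 2 * card K + 1" .
  then show "card ?S = card ({0..<2^m} - {(2::int)^(m-1)})"
    using card_signed_sums_on_ge[OF m K nonzero half]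
      card_mono[OF _ \<open>?S \<subseteq> _\<close>] by simp
qed simp

lemma signed_sums_on_cong_multiple:
  assumes "finite J" "\<forall>j\<in>J. [e j = u] (mod n) \<or> [e j = - u] (mod n)"
    and "x \<in> signed_sums_on n e J"
  shows "\<exists>X. \<bar>X\<bar> \<le> int (card J) \<and> [x = X * u] (mod n)"
proof -
  obtain \<delta> where \<delta>: "x = (\<Sum>j\<in>J. \<delta> j * e j) mod n" "\<forall>j\<in>J. \<delta> j \<in> {-1, 0, 1}"
    using assms(3) by (rule signed_sums_onE)
  define s where "s j = (if [e j = u] (mod n) then 1 else - 1 :: int)" for j
  have s: "[e j = s j * u] (mod n)" "\<bar>s j\<bar> = 1" if "j \<in> J" for j
    using assms(2) that by (auto simp: s_def)
  define X where "X = (\<Sum>j\<in>J. \<delta> j * s j)"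
  have "[(\<Sum>j\<in>J. \<delta> j * e j) = (\<Sum>j\<in>J. \<delta> j * (s j * u))] (mod n)"
    by (intro cong_sum cong_mult cong_refl s(1))
  then have "[x = X * u] (mod n)"
    by (simp add: \<delta>(1) X_def sum_distrib_right mult.assoc cong_mod_left)
  moreover have "\<bar>X\<bar> \<le> int (card J)"
  proof -
    have "\<bar>X\<bar> \<le> (\<Sum>j\<in>J. \<bar>\<delta> j * s j\<bar>)" unfolding X_def by (rule sum_abs)
    also have "\<dots> \<le> (\<Sum>j\<in>J. 1)"
      using \<delta>(2) s(2) by (intro sum_mono) (auto simp: abs_mult)
    finally show ?thesis by simp
  qed
  ultimately show ?thesis by blast
qed

lemma half_notin_signed_sums_on_if_cong_pm:
  assumes m: "m \<ge> 1" and "finite J" "card J < 2^(m-1)" "coprime u (2^m)"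
    and pm: "\<forall>j\<in>J. [e j = u] (mod 2^m) \<or> [e j = - u] (mod 2^m)"
  shows "2^(m-1) \<notin> signed_sums_on (2^m) e J"
proof
  assume "2^(m-1) \<in> signed_sums_on (2^m) e J"
  then obtain X where X: "\<bar>X\<bar> \<le> int (card J)" "[2^(m-1) = X * u] (mod 2^m)"
    using signed_sums_on_cong_multiple[OF assms(2) pm] by blast
  have pow: "(2::int)^m = 2 * 2^(m-1)" using m by (cases m) auto
  have "[2^(m-1) = X * u] (mod 2^(m-1))" using X(2) pow by (metis cong_dvd_modulus dvd_triv_right)
  then have "2^(m-1) dvd X * u" by (metis cong_dvd_iff dvd_refl)
  moreover have "coprime (2^(m-1)) u" using assms(4) m by (simp add: coprime_commute)
  ultimately have "2^(m-1) dvd X" by (simp add: coprime_dvd_mult_left_iff)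
  moreover have "int (card J) < 2^(m-1)" using assms(3) by (metis of_nat_less_iff of_nat_numeral of_nat_power)
  then have "\<bar>X\<bar> < 2^(m-1)" using X(1) by linarith
  ultimately have "X = 0" using dvd_imp_le_int by force
  then have "[(2::int)^(m-1) = 0] (mod 2^m)" using X(2) by simp
  then show False using pow by (simp add: cong_0_iff)
qed

lemma cong_pm_unit_if_half_notin_signed_sums_on:
  assumes m: "m \<ge> 1" and K: "finite K" and nonzero: "\<forall>k\<in>K. e k mod 2^m \<noteq> 0"
    and half: "2^(m-1) \<notin> signed_sums_on (2^m) e K"
    and card_K: "card K = 2^(m-1) - 1"
  shows "\<exists>u. coprime u (2^m) \<and> (\<forall>j\<in>K. [e j = u] (mod 2^m) \<or> [e j = - u] (mod 2^m))"
proof (cases "K = {}")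
  case True
  then show ?thesis by (intro exI[of _ 1]) simp
next
  case False
  then obtain k where k: "k \<in> K" by blast
  let ?S = "signed_sums_on (2^m) e K"
  have pm: "\<forall>j\<in>K. [e j = e k] (mod 2^m) \<or> [e j = - e k] (mod 2^m)"
  proof
    fix j assume j: "j \<in> K"
    show "[e j = e k] (mod 2^m) \<or> [e j = - e k] (mod 2^m)"
    proof (cases "j = k")
      case True
      then show ?thesis by simp
    next
      case False
      then show ?thesis by (rule cong_pm_if_half_notin_signed_sums_on[OF m K j k _ nonzero half card_K])
    qed
  qed
  have "0 < card K" using False K by (simp add: card_gt_0_iff)
  then have "m \<ge> 2" using card_K m by (cases "m = 1") auto
  then have one: "(1::int) \<in> {0..<2^m} - {2^(m-1)}" by auto
  have "?S = {0..<2^m} - {2^(m-1)}"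
    by (rule signed_sums_on_eq_if_card[OF m K nonzero half card_K])
  with one obtain X where "[1 = X * e k] (mod 2^m)"
    using signed_sums_on_cong_multiple[OF K pm] by blast
  then have "coprime (e k) (2^m)"
    by (auto simp: coprime_iff_invertible_int cong_sym_eq mult.commute)
  with pm show ?thesis by blast
qed

theorem lemma2p4:
  fixes m t :: nat and e :: "nat \<Rightarrow> int"
  assumes "m \<ge> 1"
    and "\<forall>j\<in>{1..t}. e j mod 2^m \<noteq> 0"
  shows "(t \<ge> 2^(m-1) \<longrightarrow> 2^(m-1) \<in> signed_sums m t e)
    \<and> (t = 2^(m-1) - 1 \<longrightarrow>
         (2^(m-1) \<notin> signed_sums m t e \<longleftrightarrow>
           (\<exists>u::int. coprime u (2^m) \<and>
              (\<forall>j\<in>{1..t}. [e j = u] (mod 2^m) \<or> [e j = - u] (mod 2^m)))))"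
  unfolding signed_sums_eq_signed_sums_on
proof (intro conjI impI)
  assume "2^(m-1) \<le> t"
  then show "2^(m-1) \<in> signed_sums_on (2^m) e {1..t}"
    using half_in_signed_sums_on[OF assms(1) finite_atLeastAtMost assms(2)] by simp
next
  assume t: "t = 2^(m-1) - 1"
  show "2^(m-1) \<notin> signed_sums_on (2^m) e {1..t} \<longleftrightarrow>
    (\<exists>u. coprime u (2^m) \<and> (\<forall>j\<in>{1..t}. [e j = u] (mod 2^m) \<or> [e j = - u] (mod 2^m)))"
  proof
    assume "2^(m-1) \<notin> signed_sums_on (2^m) e {1..t}"
    with t show "\<exists>u. coprime u (2^m) \<and> (\<forall>j\<in>{1..t}. [e j = u] (mod 2^m) \<or> [e j = - u] (mod 2^m))"
      using cong_pm_unit_if_half_notin_signed_sums_on[OF assms(1) finite_atLeastAtMost assms(2)] by simp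
  next
    assume "\<exists>u. coprime u (2^m) \<and> (\<forall>j\<in>{1..t}. [e j = u] (mod 2^m) \<or> [e j = - u] (mod 2^m))"
    then obtain u where "coprime u (2^m)" "\<forall>j\<in>{1..t}. [e j = u] (mod 2^m) \<or> [e j = - u] (mod 2^m)"
      by blast
    moreover have "card {1..t} < 2^(m-1)" using t by simp
    ultimately show "2^(m-1) \<notin> signed_sums_on (2^m) e {1..t}"
      by (intro half_notin_signed_sums_on_if_cong_pm[OF assms(1) finite_atLeastAtMost])
  qed
qed

end
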